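(* Let $\Lambda=KQ/\langle I\rangle$ be a $1$-Gorenstein gentle algebra over an algebraically closed field $K$, with Cohen–Macaulay Auslander algebra $\Gamma=KQ^{Aus}/\langle I^{Aus}\rangle$ and functor $\Phi:\mathrm{mod}\,\Lambda\to\mathrm{mod}\,\Gamma$, $M\mapsto\widehat{M}$, as described in the context. Let $M$ be a Gorenstein projective $\Lambda$-module, $e$ a dimension vector for $Q$, and $U,N$ $\Lambda$-modules. Suppose that the stratum $\mathcal{S}_{[U]}$ of $\mathrm{Gr}_e(M)$ has non-empty intersection with the closure $\overline{\mathcal{S}_{[N]}}$. Then $\underline{\dim}\,\widehat{U}\leq\underline{\dim}\,\widehat{N}$ componentwise, as dimension vectors of representations of $\Gamma$.
   Context: Conventions: arrows $\alpha:s(\alpha)\to t(\alpha)$; paths composed right to left ($\beta\alpha$ means $\alpha$ then $\beta$). A gentle algebra is a finite dimensional $\Lambda=KQ/\langle I\rangle$ where $I$ is a set of length-$2$ paths such that: each vertex is the start of at most two and the end of at most two arrows; for each arrow $\alpha$ there is at most one arrow $\beta$ with $t(\beta)=s(\alpha)$, $\alpha\beta\notin I$, at most one $\gamma$ with $s(\gamma)=t(\alpha)$, $\gamma\alpha\notin I$, at most one $\beta$ with $t(\beta)=s(\alpha)$, $\alpha\beta\in I$, and at most one $\gamma$ with $s(\gamma)=t(\alpha)$, $\gamma\alpha\in I$. $\Lambda$ is $1$-Gorenstein if its injective dimension as a left and as a right module is at most $1$. Modules are finite dimensional left modules (representations of $(Q,I)$). A $\Lambda$-module $G$ is Gorenstein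 projective if there is an exact complex $\cdots\to P^{-1}\to P^0\xrightarrow{d^0}P^1\to\cdots$ of projective $\Lambda$-modules which remains exact under $\mathrm{Hom}_\Lambda(-,\Lambda)$ and with $G\cong\mathrm{Ker}\,d^0$. $\mathcal{C}(\Lambda)$ is the set of repetition-free cyclic paths $\alpha_1\cdots\alpha_n$ (up to cyclic permutation) with $\alpha_i\alpha_{i+1}\in I$ for all $i$ (indices mod $n$); $Q_1^{cyc}$ is the set of arrows on such cycles, $Q_1^{ncyc}=Q_1\setminus Q_1^{cyc}$. $Q^{Aus}$ has vertices $Q_0\sqcup Q_1^{cyc}$ and arrows $Q_1^{ncyc}\sqcup\{\alpha^+:s(\alpha)\to\alpha\}_{\alpha\in Q_1^{cyc}}\sqcup\{\alpha^-:\alpha\to t(\alpha)\}_{\alpha\in Q_1^{cyc}}$; $I^{Aus}=\{\beta^+\alpha^-\mid\beta\alpha\in I,\ \alpha,\beta\in Q_1^{cyc}\}\cup\{\beta\alpha\mid\beta\alpha\in I,\ \alpha,\beta\in Q_1^{ncyc}\}$; $\Gamma=KQ^{Aus}/\langle I^{Aus}\rangle$. $\Phi(M)=\widehat{M}$ has $\widehat{M}_i=M_i$ ($i\in Q_0$), $\widehat{M}_\alpha=\mathrm{Im}\,M_\alpha$ ($\alpha\in Q_1^{cyc}$), $\widehat{M}_\beta=M_\beta$ ($\beta\in Q_1^{ncyc}$), and $\widehat{M}_{\alpha^+}$, $\widehat{M}_{\alpha^-}$ the surjection $M_{s(\alpha)}\to\mathrm{Im}\,M_\alpha$ and inclusion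 $\mathrm{Im}\,M_\alpha\to M_{t(\alpha)}$ factoring $M_\alpha$. $\mathrm{Gr}_e(M)$ is the quiver Grassmannian (projective variety) of submodules of $M$ of dimension vector $e$; for a $\Lambda$-module $N$, $\mathcal{S}_{[N]}\subseteq\mathrm{Gr}_e(M)$ is the (locally closed, irreducible) subset of submodules isomorphic to $N$. *)

theory Defs
  imports Main "HOL-Library.Function_Algebras" "HOL-Library.Countable"
    "HOL-Computational_Algebra.Polynomial"
begin

definition alg_closed :: "'k::field itself \<Rightarrow> bool" where
  "alg_closed _ \<longleftrightarrow> (\<forall>p :: 'k poly. degree p > 0 \<longrightarrow> (\<exists>x. poly p x = 0))"

text \<open>All vector spaces are subspaces of the ambient space nat => k.\<close>
type_synonym 'k vec = "nat \<Rightarrow> 'k"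

definition sc :: "'k::field \<Rightarrow> 'k vec \<Rightarrow> 'k vec" where
  "sc c v = (\<lambda>n. c * v n)"

abbreviation subsp :: "'k::field vec set \<Rightarrow> bool" where "subsp \<equiv> module.subspace sc"
abbreviation spn :: "'k::field vec set \<Rightarrow> 'k vec set" where "spn \<equiv> module.span sc"
abbreviation vdim :: "'k::field vec set \<Rightarrow> nat" where "vdim \<equiv> vector_space.dim sc"

definition fin_dim_subsp :: "'k::field vec set \<Rightarrow> bool" where
  "fin_dim_subsp S \<longleftrightarrow> subsp S \<and> (\<exists>B. finite B \<and> B \<subseteq> S \<and> spn B = S)"

definition linear_on :: "'k::field vec set \<Rightarrow> ('k vec \<Rightarrow> 'k vec) \<Rightarrow> bool" where
  "linear_on S f \<longleftrightarrow> (\<forall>x\<in>S. \<forall>y\<in>S. f (x + y) = f x + f y) \<and> (\<forall>c. \<forall>x\<in>S. f (sc c x) = sc c (f x))"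

text \<open>A pair (b, a) in rels stands for the length-2 path b a (first a, then b).\<close>
record ('v, 'a) bquiver =
  vs :: "'v set"
  ars :: "'a set"
  src :: "'a \<Rightarrow> 'v"
  tgt :: "'a \<Rightarrow> 'v"
  rels :: "('a \<times> 'a) set"

definition bquiver_wf :: "('v, 'a) bquiver \<Rightarrow> bool" where
  "bquiver_wf Q \<longleftrightarrow> finite (vs Q) \<and> finite (ars Q) \<and>
     (\<forall>a\<in>ars Q. src Q a \<in> vs Q \<and> tgt Q a \<in> vs Q) \<and>
     rels Q \<subseteq> {(b, a). a \<in> ars Q \<and> b \<in> ars Q \<and> tgt Q a = src Q b}"

text \<open>Paths (i, p): p = [a_k, ..., a_1] is the path a_k ... a_1 starting at i; nonzero
  in KQ/<I> iff it contains no relation (I consists of paths of length 2).\<close>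
fun path_ok :: "('v, 'a) bquiver \<Rightarrow> 'v \<Rightarrow> 'a list \<Rightarrow> bool" where
  "path_ok Q i [] = (i \<in> vs Q)"
| "path_ok Q i [a] = (a \<in> ars Q \<and> src Q a = i)"
| "path_ok Q i (b # a # r) = (b \<in> ars Q \<and> src Q b = tgt Q a \<and> (b, a) \<notin> rels Q \<and> path_ok Q i (a # r))"

fun path_end :: "('v, 'a) bquiver \<Rightarrow> 'v \<Rightarrow> 'a list \<Rightarrow> 'v" where
  "path_end Q i [] = i"
| "path_end Q i (a # r) = tgt Q a"

definition opp :: "('v, 'a) bquiver \<Rightarrow> ('v, 'a) bquiver" where
  "opp Q = \<lparr>vs = vs Q, ars = ars Q, src = tgt Q, tgt = src Q, rels = {(a, b). (b, a) \<in> rels Q}\<rparr>"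

definition gentle :: "('v, 'a) bquiver \<Rightarrow> bool" where
  "gentle Q \<longleftrightarrow> bquiver_wf Q \<and>
     finite {(i, p). path_ok Q i p} \<and>
     (\<forall>v\<in>vs Q. card {a\<in>ars Q. src Q a = v} \<le> 2 \<and> card {a\<in>ars Q. tgt Q a = v} \<le> 2) \<and>
     (\<forall>a\<in>ars Q.
        card {b\<in>ars Q. tgt Q b = src Q a \<and> (a, b) \<notin> rels Q} \<le> 1 \<and>
        card {c\<in>ars Q. src Q c = tgt Q a \<and> (c, a) \<notin> rels Q} \<le> 1 \<and>
        card {b\<in>ars Q. tgt Q b = src Q a \<and> (a, b) \<in> rels Q} \<le> 1 \<and>
        card {c\<in>ars Q. src Q c = tgt Q a \<and> (c, a) \<in> rels Q} \<le> 1)"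

record ('v, 'a, 'k) rep =
  sp :: "'v \<Rightarrow> 'k vec set"
  mp :: "'a \<Rightarrow> 'k vec \<Rightarrow> 'k vec"

text \<open>Finite dimensional representations of (Q, I) = finite dimensional left KQ/<I>-modules.\<close>
definition is_rep :: "('v, 'a) bquiver \<Rightarrow> ('v, 'a, 'k::field) rep \<Rightarrow> bool" where
  "is_rep Q M \<longleftrightarrow>
     (\<forall>i\<in>vs Q. fin_dim_subsp (sp M i)) \<and> (\<forall>i. i \<notin> vs Q \<longrightarrow> sp M i = {0}) \<and>
     (\<forall>a\<in>ars Q. linear_on (sp M (src Q a)) (mp M a) \<and> mp M a ` sp M (src Q a) \<subseteq> sp M (tgt Q a)) \<and>
     (\<forall>(b, a)\<in>rels Q. \<forall>x\<in>sp M (src Q a). mp M b (mp M a x) = 0)"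

definition is_hom :: "('v, 'a) bquiver \<Rightarrow> ('v, 'a, 'k::field) rep \<Rightarrow> ('v, 'a, 'k) rep
    \<Rightarrow> ('v \<Rightarrow> 'k vec \<Rightarrow> 'k vec) \<Rightarrow> bool" where
  "is_hom Q M N h \<longleftrightarrow>
     (\<forall>i\<in>vs Q. linear_on (sp M i) (h i) \<and> h i ` sp M i \<subseteq> sp N i) \<and>
     (\<forall>a\<in>ars Q. \<forall>x\<in>sp M (src Q a). h (tgt Q a) (mp M a x) = mp N a (h (src Q a) x))"

definition hom_eq :: "('v, 'a) bquiver \<Rightarrow> ('v, 'a, 'k::field) rep
    \<Rightarrow> ('v \<Rightarrow> 'k vec \<Rightarrow> 'k vec) \<Rightarrow> ('v \<Rightarrow> 'k vec \<Rightarrow> 'k vec) \<Rightarrow> bool" where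
  "hom_eq Q M f g \<longleftrightarrow> (\<forall>i\<in>vs Q. \<forall>x\<in>sp M i. f i x = g i x)"

definition hcomp :: "('v \<Rightarrow> 'k vec \<Rightarrow> 'k vec) \<Rightarrow> ('v \<Rightarrow> 'k vec \<Rightarrow> 'k vec) \<Rightarrow> ('v \<Rightarrow> 'k vec \<Rightarrow> 'k vec)" where
  "hcomp g f = (\<lambda>i. g i \<circ> f i)"

definition is_iso :: "('v, 'a) bquiver \<Rightarrow> ('v, 'a, 'k::field) rep \<Rightarrow> ('v, 'a, 'k) rep
    \<Rightarrow> ('v \<Rightarrow> 'k vec \<Rightarrow> 'k vec) \<Rightarrow> bool" where
  "is_iso Q M N h \<longleftrightarrow> is_hom Q M N h \<and> (\<forall>i\<in>vs Q. bij_betw (h i) (sp M i) (sp N i))"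

definition isomorphic :: "('v, 'a) bquiver \<Rightarrow> ('v, 'a, 'k::field) rep \<Rightarrow> ('v, 'a, 'k) rep \<Rightarrow> bool" where
  "isomorphic Q M N \<longleftrightarrow> (\<exists>h. is_iso Q M N h)"

definition projective :: "('v, 'a) bquiver \<Rightarrow> ('v, 'a, 'k::field) rep \<Rightarrow> bool" where
  "projective Q P \<longleftrightarrow> is_rep Q P \<and>
     (\<forall>(M :: ('v, 'a, 'k) rep) N g f. is_rep Q M \<longrightarrow> is_rep Q N \<longrightarrow> is_hom Q M N g \<longrightarrow>
        (\<forall>i\<in>vs Q. g i ` sp M i = sp N i) \<longrightarrow> is_hom Q P N f \<longrightarrow>
        (\<exists>h. is_hom Q P M h \<and> hom_eq Q P (hcomp g h) f))"

definition injective :: "('v, 'a) bquiver \<Rightarrow> ('v, 'a, 'k::field) rep \<Rightarrow> bool" where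
  "injective Q J \<longleftrightarrow> is_rep Q J \<and>
     (\<forall>(M :: ('v, 'a, 'k) rep) N f g. is_rep Q M \<longrightarrow> is_rep Q N \<longrightarrow> is_hom Q M N f \<longrightarrow>
        (\<forall>i\<in>vs Q. inj_on (f i) (sp M i)) \<longrightarrow> is_hom Q M J g \<longrightarrow>
        (\<exists>h. is_hom Q N J h \<and> hom_eq Q M (hcomp h f) g))"

text \<open>The regular left module KQ/<I>, with basis the nonzero paths (i, p), p ending at the
  vertex; the arrow a acts by left multiplication p |-> a p.\<close>
definition delta :: "nat \<Rightarrow> 'k::field vec" where
  "delta n = (\<lambda>m. if m = n then 1 else 0)"

definition regular_rep :: "('v::countable, 'a::countable) bquiver \<Rightarrow> ('v, 'a, 'k::field) rep" where
  "regular_rep Q = \<lparr>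
     sp = (\<lambda>j. if j \<in> vs Q then spn {delta (to_nat (i, p)) | i p. path_ok Q i p \<and> path_end Q i p = j} else {0}),
     mp = (\<lambda>a v n. if n \<in> range (to_nat :: 'v \<times> 'a list \<Rightarrow> nat) then
             (case (from_nat n :: 'v \<times> 'a list) of (i, p) \<Rightarrow>
                if path_ok Q i p \<and> p \<noteq> [] \<and> hd p = a then v (to_nat (i, tl p)) else 0)
           else 0)\<rparr>"

text \<open>Injective dimension of the regular module at most 1: an injective coresolution
  0 -> Lambda -> I0 -> I1 -> 0.\<close>
definition injdim_regular_le1 :: "('v::countable, 'a::countable) bquiver \<Rightarrow> 'k::field itself \<Rightarrow> bool" where
  "injdim_regular_le1 Q _ \<longleftrightarrow>
     (\<exists>(J0 :: ('v, 'a, 'k) rep) J1 f g. injective Q J0 \<and> injective Q J1 \<and>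
        is_hom Q (regular_rep Q) J0 f \<and> is_hom Q J0 J1 g \<and>
        (\<forall>i\<in>vs Q. inj_on (f i) (sp (regular_rep Q) i)) \<and>
        (\<forall>i\<in>vs Q. f i ` sp (regular_rep Q) i = {x\<in>sp J0 i. g i x = 0}) \<and>
        (\<forall>i\<in>vs Q. g i ` sp J0 i = sp J1 i))"

text \<open>1-Gorenstein: injective dimension at most 1 as a left module and as a right module
  (right KQ/<I>-modules = left modules over the opposite bound quiver).\<close>
definition one_gorenstein :: "('v::countable, 'a::countable) bquiver \<Rightarrow> 'k::field itself \<Rightarrow> bool" where
  "one_gorenstein Q K \<longleftrightarrow> injdim_regular_le1 Q K \<and> injdim_regular_le1 (opp Q) K"

definition kernel_rep :: "('v, 'a, 'k::field) rep \<Rightarrow> ('v \<Rightarrow> 'k vec \<Rightarrow> 'k vec) \<Rightarrow> ('v, 'a, 'k) rep" where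
  "kernel_rep M f = \<lparr>sp = (\<lambda>i. {x\<in>sp M i. f i x = 0}), mp = mp M\<rparr>"

definition gorenstein_projective :: "('v::countable, 'a::countable) bquiver \<Rightarrow> ('v, 'a, 'k::field) rep \<Rightarrow> bool" where
  "gorenstein_projective Q G \<longleftrightarrow>
     (\<exists>(P :: int \<Rightarrow> ('v, 'a, 'k) rep) d.
        (\<forall>n. projective Q (P n)) \<and> (\<forall>n. is_hom Q (P n) (P (n + 1)) (d n)) \<and>
        (\<forall>n. \<forall>i\<in>vs Q. d (n - 1) i ` sp (P (n - 1)) i = {x\<in>sp (P n) i. d n i x = 0}) \<and>
        (\<forall>n \<phi>. is_hom Q (P n) (regular_rep Q) \<phi> \<longrightarrow>
            hom_eq Q (P (n - 1)) (hcomp \<phi> (d (n - 1))) (\<lambda>_ _. 0) \<longrightarrow>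
            (\<exists>\<psi>. is_hom Q (P (n + 1)) (regular_rep Q) \<psi> \<and> hom_eq Q (P n) \<phi> (hcomp \<psi> (d n)))) \<and>
        isomorphic Q G (kernel_rep (P 0) (d 0)))"

definition grass_pre :: "('v, 'a) bquiver \<Rightarrow> ('v, 'a, 'k::field) rep \<Rightarrow> ('v \<Rightarrow> nat) \<Rightarrow> ('v \<Rightarrow> 'k vec set) set" where
  "grass_pre Q M e = {L. (\<forall>i\<in>vs Q. subsp (L i) \<and> L i \<subseteq> sp M i \<and> vdim (L i) = e i) \<and>
                          (\<forall>i. i \<notin> vs Q \<longrightarrow> L i = {0})}"

definition Gr :: "('v, 'a) bquiver \<Rightarrow> ('v, 'a, 'k::field) rep \<Rightarrow> ('v \<Rightarrow> nat) \<Rightarrow> ('v \<Rightarrow> 'k vec set) set" where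
  "Gr Q M e = {L\<in>grass_pre Q M e. \<forall>a\<in>ars Q. mp M a ` L (src Q a) \<subseteq> L (tgt Q a)}"

definition stratum :: "('v, 'a) bquiver \<Rightarrow> ('v, 'a, 'k::field) rep \<Rightarrow> ('v \<Rightarrow> nat) \<Rightarrow> ('v, 'a, 'k) rep
    \<Rightarrow> ('v \<Rightarrow> 'k vec set) set" where
  "stratum Q M e N = {L\<in>Gr Q M e. isomorphic Q \<lparr>sp = L, mp = mp M\<rparr> N}"

inductive_set polyfun :: "(('c \<Rightarrow> 'k::field) \<Rightarrow> 'k) set" where
  pvar: "(\<lambda>x. x c) \<in> polyfun"
| pconst: "(\<lambda>x. a) \<in> polyfun"
| padd: "f \<in> polyfun \<Longrightarrow> g \<in> polyfun \<Longrightarrow> (\<lambda>x. f x + g x) \<in> polyfun"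
| pmult: "f \<in> polyfun \<Longrightarrow> g \<in> polyfun \<Longrightarrow> (\<lambda>x. f x * g x) \<in> polyfun"

definition basis_of :: "('v, 'a) bquiver \<Rightarrow> ('v, 'a, 'k::field) rep \<Rightarrow> 'v \<Rightarrow> nat \<Rightarrow> 'k vec" where
  "basis_of Q M = (SOME b. \<forall>i\<in>vs Q. inj_on (b i) {..<vdim (sp M i)} \<and>
      \<not> module.dependent sc (b i ` {..<vdim (sp M i)}) \<and> spn (b i ` {..<vdim (sp M i)}) = sp M i)"

text \<open>Coordinates C (i, r, c): r-th coordinate (w.r.t. the basis of M_i) of the c-th spanning
  vector of the subspace at vertex i; the subspaces spanned.\<close>
definition coord_sub :: "('v, 'a) bquiver \<Rightarrow> ('v, 'a, 'k::field) rep \<Rightarrow> ('v \<Rightarrow> nat)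
    \<Rightarrow> ('v \<times> nat \<times> nat \<Rightarrow> 'k) \<Rightarrow> 'v \<Rightarrow> 'k vec set" where
  "coord_sub Q M e C i = (if i \<in> vs Q then
      spn {(\<Sum>r<vdim (sp M i). sc (C (i, r, c)) (basis_of Q M i r)) | c. c < e i} else {0})"

text \<open>The (open) Stiefel-type set of coordinate tuples of full rank; it maps onto the
  product of Grassmannians grass_pre.\<close>
definition stiefel :: "('v, 'a) bquiver \<Rightarrow> ('v, 'a, 'k::field) rep \<Rightarrow> ('v \<Rightarrow> nat)
    \<Rightarrow> ('v \<times> nat \<times> nat \<Rightarrow> 'k) set" where
  "stiefel Q M e = {C. (\<forall>i r c. (i \<notin> vs Q \<or> r \<ge> vdim (sp M i) \<or> c \<ge> e i) \<longrightarrow> C (i, r, c) = 0) \<and>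
                       (\<forall>i\<in>vs Q. vdim (coord_sub Q M e C i) = e i)}"

text \<open>Zariski-closed subsets of the product of Grassmannians: those whose preimage in the
  Stiefel set is (relatively) Zariski closed.\<close>
definition zclosed :: "('v, 'a) bquiver \<Rightarrow> ('v, 'a, 'k::field) rep \<Rightarrow> ('v \<Rightarrow> nat)
    \<Rightarrow> ('v \<Rightarrow> 'k vec set) set \<Rightarrow> bool" where
  "zclosed Q M e A \<longleftrightarrow> A \<subseteq> grass_pre Q M e \<and>
     (\<exists>F \<subseteq> polyfun. {C\<in>stiefel Q M e. coord_sub Q M e C \<in> A} = {C\<in>stiefel Q M e. \<forall>f\<in>F. f C = 0})"

definition gr_closure :: "('v, 'a) bquiver \<Rightarrow> ('v, 'a, 'k::field) rep \<Rightarrow> ('v \<Rightarrow> nat)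
    \<Rightarrow> ('v \<Rightarrow> 'k vec set) set \<Rightarrow> ('v \<Rightarrow> 'k vec set) set" where
  "gr_closure Q M e S = \<Inter>{A. zclosed Q M e A \<and> S \<subseteq> A} \<inter> Gr Q M e"

definition cyc_arrows :: "('v, 'a) bquiver \<Rightarrow> 'a set" where
  "cyc_arrows Q = {a. \<exists>cs. cs \<noteq> [] \<and> distinct cs \<and> set cs \<subseteq> ars Q \<and> a \<in> set cs \<and>
       (\<forall>k<length cs. (cs ! k, cs ! ((k + 1) mod length cs)) \<in> rels Q)}"

text \<open>Arrows of Q^Aus: Inl b (b non-cyclic), Inr (Inl a) = a^+, Inr (Inr a) = a^-.
  Vertices: Inl i (i in Q_0), Inr a (a cyclic).\<close>
definition aus :: "('v, 'a) bquiver \<Rightarrow> ('v + 'a, 'a + 'a + 'a) bquiver" where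
  "aus Q = \<lparr>
     vs = Inl ` vs Q \<union> Inr ` cyc_arrows Q,
     ars = Inl ` (ars Q - cyc_arrows Q) \<union> (Inr \<circ> Inl) ` cyc_arrows Q \<union> (Inr \<circ> Inr) ` cyc_arrows Q,
     src = (\<lambda>x. case x of Inl b \<Rightarrow> Inl (src Q b) | Inr (Inl a) \<Rightarrow> Inl (src Q a) | Inr (Inr a) \<Rightarrow> Inr a),
     tgt = (\<lambda>x. case x of Inl b \<Rightarrow> Inl (tgt Q b) | Inr (Inl a) \<Rightarrow> Inr a | Inr (Inr a) \<Rightarrow> Inl (tgt Q a)),
     rels = {(Inr (Inl b), Inr (Inr a)) | a b. (b, a) \<in> rels Q \<and> a \<in> cyc_arrows Q \<and> b \<in> cyc_arrows Q}
          \<union> {(Inl b, Inl a) | a b. (b, a) \<in> rels Q \<and> a \<notin> cyc_arrows Q \<and> b \<notin> cyc_arrows Q}\<rparr>"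

definition Phi :: "('v, 'a) bquiver \<Rightarrow> ('v, 'a, 'k::field) rep \<Rightarrow> ('v + 'a, 'a + 'a + 'a, 'k) rep" where
  "Phi Q M = \<lparr>
     sp = (\<lambda>x. case x of Inl i \<Rightarrow> sp M i
              | Inr a \<Rightarrow> (if a \<in> cyc_arrows Q then mp M a ` sp M (src Q a) else {0})),
     mp = (\<lambda>x. case x of Inl b \<Rightarrow> mp M b | Inr (Inl a) \<Rightarrow> mp M a | Inr (Inr a) \<Rightarrow> id)\<rparr>"

definition dimvec :: "('v, 'a, 'k::field) rep \<Rightarrow> 'v \<Rightarrow> nat" where
  "dimvec R = (\<lambda>x. vdim (sp R x))"

end

theory Submission
  imports Defs "Jordan_Normal_Form.Determinant"
begin

text \<open>For \<open>L\<close> in the stratum \<open>\<S>\<^bsub>[X]\<^esub> \<subseteq> Gr\<^sub>e(M)\<close>, the dimension vector of \<open>\<Phi>(X)\<close> is \<open>e\<close>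
  at the vertices of \<open>Q\<close> and, at a cyclic arrow \<open>\<alpha>\<close>, the rank of \<open>M\<^sub>\<alpha>\<close> restricted to \<open>L\<close>.
  In the Stiefel coordinates of \<open>Gr\<^sub>e(M)\<close>, \<open>rank (M\<^sub>\<alpha>|\<^sub>L) \<le> R\<close> says that all
  \<open>(R+1)\<close>-minors of a matrix with polynomial entries vanish, so this locus is Zariski closed.
  Taking for \<open>R\<close> the rank attained on \<open>\<S>\<^bsub>[N]\<^esub>\<close>, it contains the closure of \<open>\<S>\<^bsub>[N]\<^esub>\<close>
  and hence every point of \<open>\<S>\<^bsub>[U]\<^esub>\<close> in it.\<close>

interpretation V: Vector_Spaces.vector_space "sc :: 'k::field \<Rightarrow> (nat \<Rightarrow> 'k) \<Rightarrow> _"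
  by unfold_locales (auto simp: sc_def fun_eq_iff algebra_simps)

lemma sc_apply: "sc c v n = c * v n"
  by (simp add: sc_def)

lemma sum_apply: "(\<Sum>x\<in>A. f x) n = (\<Sum>x\<in>A. f x n)"
  for f :: "'b \<Rightarrow> nat \<Rightarrow> 'k::field"
  by (induction A rule: infinite_finite_induct) auto

lemma linear_on_zero:
  assumes "subsp S" "linear_on S f"
  shows "f 0 = 0"
proof -
  have "f (sc 0 0) = sc 0 (f 0)"
    using assms V.subspace_0 unfolding linear_on_def by blast
  then show ?thesis by (simp add: fun_eq_iff)
qed

lemma linear_on_sum:
  assumes S: "subsp S" and f: "linear_on S f" and "finite T" and "\<And>x. x \<in> T \<Longrightarrow> g x \<in> S"
  shows "f (\<Sum>x\<in>T. sc (c x) (g x)) = (\<Sum>x\<in>T. sc (c x) (f (g x)))"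
  using assms(3,4)
proof (induction T rule: finite_induct)
  case empty
  then show ?case using linear_on_zero[OF S f] by (simp add: zero_fun_def)
next
  case (insert x F)
  have gx: "g x \<in> S" using insert by auto
  have sum_F: "(\<Sum>x\<in>F. sc (c x) (g x)) \<in> S"
    using insert S by (intro V.subspace_sum V.subspace_scale) auto
  have "f (\<Sum>x\<in>insert x F. sc (c x) (g x)) = f (sc (c x) (g x) + (\<Sum>x\<in>F. sc (c x) (g x)))"
    using insert by simp
  also have "\<dots> = sc (c x) (f (g x)) + f (\<Sum>x\<in>F. sc (c x) (g x))"
    using f gx sum_F V.subspace_scale[OF S gx] unfolding linear_on_def by simp
  also have "\<dots> = (\<Sum>x\<in>insert x F. sc (c x) (f (g x)))"
    using insert.hyps insert.prems insert.IH by simp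
  finally show ?case .
qed

lemma subsp_linear_on_image:
  assumes S: "subsp S" and f: "linear_on S f" and W: "subsp W" "W \<subseteq> S"
  shows "subsp (f ` W)"
proof (rule V.subspaceI)
  show "0 \<in> f ` W" using linear_on_zero[OF S f] V.subspace_0[OF W(1)] by force
next
  fix x y assume "x \<in> f ` W" "y \<in> f ` W"
  then obtain a b where "a \<in> W" "b \<in> W" "x = f a" "y = f b" by auto
  moreover from this W have "a \<in> S" "b \<in> S" by auto
  ultimately have "x + y = f (a + b)" "a + b \<in> W"
    using f W unfolding linear_on_def by (auto intro: V.subspace_add)
  then show "x + y \<in> f ` W" by blast
next
  fix c x assume "x \<in> f ` W"
  then obtain a where "a \<in> W" "x = f a" by auto
  moreover from this W have "a \<in> S" by auto
  ultimately have "sc c x = f (sc c a)" "sc c a \<in> W"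
    using f W unfolding linear_on_def by (auto intro: V.subspace_scale)
  then show "sc c x \<in> f ` W" by blast
qed

lemma linear_on_image_span:
  assumes S: "subsp S" and f: "linear_on S f" and T: "T \<subseteq> S"
  shows "f ` spn T = spn (f ` T)"
proof
  have spn_T: "spn T \<subseteq> S" using V.span_minimal[OF T S] .
  then have "linear_on (spn T) f" using f unfolding linear_on_def by blast
  then show "spn (f ` T) \<subseteq> f ` spn T"
    using subsp_linear_on_image[OF V.subspace_span _ V.subspace_span]
    by (intro V.span_minimal) (auto intro: V.span_base)
  let ?P = "{x \<in> S. f x \<in> spn (f ` T)}"
  have "subsp ?P"
    using f S linear_on_zero[OF S f] unfolding linear_on_def
    by (intro V.subspaceI) (auto intro: V.span_add V.span_scale V.subspace_add V.subspace_scale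
        V.subspace_0 V.span_zero)
  then have "spn T \<subseteq> ?P"
    using T by (intro V.span_minimal) (auto intro: V.span_base)
  then show "f ` spn T \<subseteq> spn (f ` T)" by blast
qed

lemma independent_linear_on_inj_image:
  assumes S: "subsp S" and f: "linear_on S f" and inj: "inj_on f S" and B: "B \<subseteq> S"
    and ind: "V.independent B"
  shows "V.independent (f ` B)"
  unfolding V.independent_explicit_module
proof (intro allI impI)
  fix t u v assume t: "finite t" "t \<subseteq> f ` B" and s: "(\<Sum>v\<in>t. sc (u v) v) = 0" and v: "v \<in> t"
  obtain t' where t': "t' \<subseteq> B" "inj_on f t'" "t = f ` t'" using t(2) subset_image_inj by metis
  have "finite t'" using t t' finite_image_iff by metis
  have "(\<Sum>x\<in>t'. sc (u (f x)) (f x)) = 0" using s t' by (simp add: sum.reindex)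
  then have "f (\<Sum>x\<in>t'. sc (u (f x)) x) = f 0"
    using linear_on_sum[OF S f \<open>finite t'\<close>, of id "\<lambda>x. u (f x)"] linear_on_zero[OF S f] t' B
    by auto
  moreover have "(\<Sum>x\<in>t'. sc (u (f x)) x) \<in> S"
    using t' B S by (intro V.subspace_sum V.subspace_scale) auto
  ultimately have "(\<Sum>x\<in>t'. sc (u (f x)) x) = 0"
    using inj_onD[OF inj] V.subspace_0[OF S] by blast
  moreover obtain x where "x \<in> t'" "v = f x" using v t' by auto
  ultimately show "u v = 0"
    using ind[unfolded V.independent_explicit_module, rule_format, of t' "\<lambda>x. u (f x)" x]
      \<open>finite t'\<close> t'(1) by blast
qed

lemma vdim_linear_on_inj_image:
  assumes S: "subsp S" and f: "linear_on S f" and inj: "inj_on f S" and W: "subsp W" "W \<subseteq> S"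
  shows "vdim (f ` W) = vdim W"
proof -
  obtain B where B: "B \<subseteq> W" "V.independent B" "W \<subseteq> spn B" "card B = vdim W"
    using V.basis_exists by blast
  have "spn B = W" using V.span_subspace[OF B(1) B(3) W(1)] .
  then have image: "f ` W = spn (f ` B)" using linear_on_image_span[OF S f] B(1) W(2) by auto
  have "V.independent (f ` B)" using independent_linear_on_inj_image[OF S f inj] B W by auto
  then have "vdim (f ` W) = card (f ` B)"
    unfolding image by (rule V.dim_span_eq_card_independent)
  also have "\<dots> = card B" using inj B W by (meson card_image inj_on_subset subset_trans)
  finally show ?thesis using B(4) by simp
qed

section \<open>Rank and minors\<close>

lemma nontrivial_relation_of_dim_span_le:
  fixes u :: "nat \<Rightarrow> nat \<Rightarrow> 'k::field"
  assumes X: "finite X" and dim: "vdim (spn X) \<le> R" and u: "\<forall>q<Suc R. u q \<in> spn X"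
  shows "\<exists>x. (\<exists>q<Suc R. x q \<noteq> 0) \<and> (\<forall>n. (\<Sum>q<Suc R. x q * u q n) = 0)"
proof (cases "inj_on u {..<Suc R}")
  case False
  then obtain q1 q2 where q: "q1 < Suc R" "q2 < Suc R" "q1 \<noteq> q2" "u q1 = u q2"
    by (auto simp: inj_on_def)
  define x where "x q = (if q = q1 then 1 else if q = q2 then -1 else (0::'k))" for q
  have "(\<Sum>q<Suc R. x q * u q n) = 0" for n
  proof -
    have "(\<Sum>q<Suc R. x q * u q n) = (\<Sum>q\<in>{q1,q2}. x q * u q n)"
      by (rule sum.mono_neutral_right) (use q in \<open>auto simp: x_def\<close>)
    also have "\<dots> = 0" using q by (simp add: x_def)
    finally show ?thesis .
  qed
  moreover have "x q1 \<noteq> 0" by (simp add: x_def)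
  ultimately show ?thesis using q by blast
next
  case True
  let ?U = "u ` {..<Suc R}"
  have "V.dependent ?U"
  proof (rule ccontr)
    assume independent: "V.independent ?U"
    obtain B where B: "B \<subseteq> spn X" "V.independent B" "spn X \<subseteq> spn B" "card B = vdim (spn X)"
      using V.basis_exists by blast
    have "finite B" using V.independent_span_bound[OF X B(2,1)] by simp
    moreover have "?U \<subseteq> spn B" using u B(3) by auto
    ultimately have "card ?U \<le> card B" using V.independent_span_bound[OF _ independent] by simp
    then show False using card_image[OF True] B(4) dim by simp
  qed
  then obtain t c where t: "finite t" "t \<subseteq> ?U" "(\<Sum>v\<in>t. sc (c v) v) = 0"
    and nontrivial: "\<exists>v\<in>t. c v \<noteq> 0"
    unfolding V.dependent_explicit by blast
  define x where "x q = (if u q \<in> t then c (u q) else 0)" for q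
  have "(\<Sum>q<Suc R. x q * u q n) = 0" for n
  proof -
    have "(\<Sum>q<Suc R. x q * u q n) = (\<Sum>q\<in>{q\<in>{..<Suc R}. u q \<in> t}. c (u q) * u q n)"
      by (subst sum.inter_filter) (auto simp: x_def intro!: sum.cong)
    also have "\<dots> = (\<Sum>v\<in>u ` {q\<in>{..<Suc R}. u q \<in> t}. c v * v n)"
      by (rule sum.reindex[symmetric, unfolded comp_def]) (rule inj_on_subset[OF True], auto)
    also have "u ` {q\<in>{..<Suc R}. u q \<in> t} = t" using t(2) by auto
    also have "(\<Sum>v\<in>t. c v * v n) = (\<Sum>v\<in>t. sc (c v) v) n" by (simp add: sum_apply sc_apply)
    finally show ?thesis using t(3) by simp
  qed
  moreover obtain q0 where "q0 < Suc R" "x q0 \<noteq> 0" using nontrivial t(2) by (auto simp: x_def)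
  ultimately show ?thesis by blast
qed

lemma minor_zero_of_dim_span_le:
  fixes u :: "nat \<Rightarrow> nat \<Rightarrow> 'k::field"
  assumes "finite X" and "vdim (spn X) \<le> R" and "\<forall>q<Suc R. u q \<in> spn X"
  shows "det (mat (Suc R) (Suc R) (\<lambda>(p, q). u q (ns p))) = 0"
proof -
  obtain x where x: "\<exists>q<Suc R. x q \<noteq> 0" "\<forall>n. (\<Sum>q<Suc R. x q * u q n) = 0"
    using nontrivial_relation_of_dim_span_le[OF assms] by blast
  let ?A = "mat (Suc R) (Suc R) (\<lambda>(p, q). u q (ns p))"
  let ?v = "vec (Suc R) x"
  have "?v \<noteq> 0\<^sub>v (Suc R)" using x(1) by (auto simp: vec_eq_iff)
  moreover have "?A *\<^sub>v ?v = 0\<^sub>v (Suc R)"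
  proof (rule eq_vecI)
    fix p assume p: "p < dim_vec (0\<^sub>v (Suc R) :: 'k Matrix.vec)"
    have "(?A *\<^sub>v ?v) $ p = (\<Sum>q\<in>{0..<Suc R}. u q (ns p) * x q)"
      using p by (simp add: scalar_prod_def)
    also have "\<dots> = (\<Sum>q<Suc R. x q * u q (ns p))" by (simp add: atLeast0LessThan mult.commute)
    finally show "(?A *\<^sub>v ?v) $ p = 0\<^sub>v (Suc R) $ p" using x(2) p by simp
  qed simp
  moreover have "?v \<in> carrier_vec (Suc R)" by simp
  ultimately show ?thesis
    using det_0_iff_vec_prod_zero[of ?A "Suc R"] mat_carrier[of "Suc R" "Suc R"] by blast
qed

text \<open>Induction on \<open>K\<close>: if every choice of the last row gave a vanishing \<open>K \<times> K\<close> minor,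
  Laplace expansion along that row would be a linear relation among the \<open>u q\<close> whose
  last coefficient is a nonzero \<open>(K - 1) \<times> (K - 1)\<close> minor.\<close>
lemma nonzero_minor_of_independent:
  fixes u :: "nat \<Rightarrow> nat \<Rightarrow> 'k::field"
  shows "inj_on u {..<K} \<Longrightarrow> V.independent (u ` {..<K}) \<Longrightarrow>
    \<exists>ns. det (mat K K (\<lambda>(p, q). u q (ns p))) \<noteq> 0"
proof (induction K)
  case 0
  then show ?case by simp
next
  case (Suc K)
  have "inj_on u {..<K}" using Suc.prems(1) by (rule inj_on_subset) auto
  moreover have "V.independent (u ` {..<K})"
    using Suc.prems(2) by (rule V.independent_mono) auto
  ultimately obtain ns' where minor: "det (mat K K (\<lambda>(p, q). u q (ns' p))) \<noteq> 0"
    using Suc.IH by blast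
  show ?case
  proof (rule ccontr)
    assume "\<not> ?case"
    then have all_zero: "det (mat (Suc K) (Suc K) (\<lambda>(p, q). u q (ns p))) = 0" for ns by blast
    define A where "A n = mat (Suc K) (Suc K) (\<lambda>(p, q). u q ((ns'(K := n)) p))" for n
    define \<gamma> where "\<gamma> q = cofactor (A 0) K q" for q
    have delete_row: "mat_delete (A n) K q = mat_delete (A 0) K q" for n q
      by (rule eq_matI) (auto simp: mat_delete_def A_def)
    have "mat_delete (A 0) K K = mat K K (\<lambda>(p, q). u q (ns' p))"
      by (rule eq_matI) (auto simp: mat_delete_def A_def)
    then have \<gamma>_K: "\<gamma> K = det (mat K K (\<lambda>(p, q). u q (ns' p)))"
      unfolding \<gamma>_def cofactor_def by (simp flip: mult_2)
    have relation: "(\<Sum>q<Suc K. \<gamma> q * u q n) = 0" for n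
    proof -
      have "A n \<in> carrier_mat (Suc K) (Suc K)" by (simp add: A_def)
      from laplace_expansion_row[OF this, of K]
      have "det (A n) = (\<Sum>j<Suc K. A n $$ (K, j) * cofactor (A n) K j)" by simp
      also have "\<dots> = (\<Sum>j<Suc K. \<gamma> j * u j n)"
      proof (rule sum.cong)
        fix j assume "j \<in> {..<Suc K}"
        then have "A n $$ (K, j) = u j n" by (simp add: A_def)
        then show "A n $$ (K, j) * cofactor (A n) K j = \<gamma> j * u j n"
          unfolding \<gamma>_def cofactor_def delete_row[of n j] by simp
      qed simp
      finally show ?thesis using all_zero[of "ns'(K := n)"] by (simp add: A_def)
    qed
    let ?U = "u ` {..<Suc K}"
    define c where "c v = \<gamma> (the_inv_into {..<Suc K} u v)" for v
    have "(\<Sum>v\<in>?U. sc (c v) v) = (\<Sum>q<Suc K. sc (\<gamma> q) (u q))"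
      by (subst sum.reindex[OF Suc.prems(1)]) (auto simp: c_def the_inv_into_f_f[OF Suc.prems(1)])
    also have "\<dots> = 0" using relation by (simp add: fun_eq_iff sum_apply sc_apply)
    finally have "V.dependent ?U"
      unfolding V.dependent_explicit
      using minor \<gamma>_K by (intro exI[of _ ?U] exI[of _ c])
        (auto simp: c_def the_inv_into_f_f[OF Suc.prems(1)] intro!: bexI[of _ K])
    then show False using Suc.prems(2) by blast
  qed
qed

lemma dim_span_le_iff_minors_zero:
  fixes w :: "nat \<Rightarrow> nat \<Rightarrow> 'k::field"
  shows "vdim (spn (w ` {..<m})) \<le> R \<longleftrightarrow>
    (\<forall>cs ns. (\<forall>q<Suc R. cs q < m) \<longrightarrow> det (mat (Suc R) (Suc R) (\<lambda>(p, q). w (cs q) (ns p))) = 0)"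
    (is "_ \<longleftrightarrow> ?minors_zero")
proof
  assume dim: "vdim (spn (w ` {..<m})) \<le> R"
  show ?minors_zero
  proof (intro allI impI)
    fix cs ns assume "\<forall>q<Suc R. cs q < m"
    then show "det (mat (Suc R) (Suc R) (\<lambda>(p, q). w (cs q) (ns p))) = 0"
      by (intro minor_zero_of_dim_span_le[OF _ dim]) (auto intro: V.span_base)
  qed
next
  assume ?minors_zero
  show "vdim (spn (w ` {..<m})) \<le> R"
  proof (rule ccontr)
    assume dim: "\<not> ?thesis"
    let ?X = "w ` {..<m}"
    obtain B where B: "B \<subseteq> ?X" "V.independent B" "?X \<subseteq> spn B"
      using V.maximal_independent_subset by blast
    have "spn B = spn ?X"
      using B by (meson V.span_minimal V.span_mono V.subspace_span subset_antisym)
    then have "card B > R"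
      using V.dim_span_eq_card_independent[OF B(2)] dim by simp
    then obtain B' where B': "B' \<subseteq> B" "card B' = Suc R"
      using obtain_subset_with_card_n[of "Suc R" B] by (metis Suc_leI)
    then have "finite B'" using card.infinite by fastforce
    then obtain g where g: "bij_betw g {..<Suc R} B'"
      using ex_bij_betw_nat_finite[of B'] B' by (auto simp: atLeast0LessThan)
    define cs where "cs q = (SOME c. c < m \<and> w c = g q)" for q
    have cs: "cs q < m \<and> w (cs q) = g q" if "q < Suc R" for q
    proof -
      have "g q \<in> ?X" using bij_betw_apply[OF g] that B(1) B'(1) by auto
      then have "\<exists>c. c < m \<and> w c = g q" by auto
      then show ?thesis unfolding cs_def by (rule someI_ex)
    qed
    let ?u = "\<lambda>q. w (cs q)"
    have "inj_on ?u {..<Suc R}"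
      using bij_betw_imp_inj_on[OF g] cs by (simp add: inj_on_def)
    moreover have "?u ` {..<Suc R} = B'"
      using bij_betw_imp_surj_on[OF g] cs by (auto simp: image_iff)
    then have "V.independent (?u ` {..<Suc R})" using B' B(2) V.independent_mono by metis
    ultimately obtain ns where "det (mat (Suc R) (Suc R) (\<lambda>(p, q). ?u q (ns p))) \<noteq> 0"
      using nonzero_minor_of_independent by blast
    then show False using \<open>?minors_zero\<close> cs by auto
  qed
qed

lemma polyfun_sum: "(\<forall>x\<in>A. f x \<in> polyfun) \<Longrightarrow> (\<lambda>C. \<Sum>x\<in>A. f x C) \<in> polyfun"
  by (induction A rule: infinite_finite_induct) (auto intro: polyfun.intros)

lemma polyfun_prod: "(\<forall>x\<in>A. f x \<in> polyfun) \<Longrightarrow> (\<lambda>C. \<Prod>x\<in>A. f x C) \<in> polyfun"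
  by (induction A rule: infinite_finite_induct) (auto intro: polyfun.intros)

lemma polyfun_det:
  fixes g :: "('c \<Rightarrow> 'k::field) \<Rightarrow> nat \<Rightarrow> nat \<Rightarrow> 'k"
  assumes "\<forall>i j. (\<lambda>C. g C i j) \<in> polyfun"
  shows "(\<lambda>C. det (mat n n (\<lambda>(i, j). g C i j))) \<in> polyfun"
proof -
  have leibniz: "det (mat n n (\<lambda>(i, j). g C i j)) =
     (\<Sum>p\<in>{p. p permutes {0..<n}}. signof p * (\<Prod>i\<in>{0..<n}. g C i (p i)))" for C
    by (subst det_def') (auto intro!: sum.cong prod.cong simp: permutes_in_image)
  have "(\<lambda>C. \<Sum>p\<in>{p. p permutes {0..<n}}. signof p * (\<Prod>i\<in>{0..<n}. g C i (p i))) \<in> polyfun"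
    by (rule polyfun_sum)
      (auto intro!: polyfun.pmult[OF polyfun.pconst] polyfun_prod[unfolded Ball_def] simp: assms)
  then show ?thesis unfolding leibniz .
qed

lemma basis_of_spec:
  assumes M: "is_rep Q M" and i: "i \<in> vs Q"
  shows "inj_on (basis_of Q M i) {..<vdim (sp M i)} \<and>
      V.independent (basis_of Q M i ` {..<vdim (sp M i)}) \<and>
      spn (basis_of Q M i ` {..<vdim (sp M i)}) = sp M i"
proof -
  have "\<exists>b. inj_on b {..<vdim (sp M i)} \<and>
      V.independent (b ` {..<vdim (sp M i)}) \<and> spn (b ` {..<vdim (sp M i)}) = sp M i"
    if i: "i \<in> vs Q" for i
  proof -
    obtain B0 where B0: "finite B0" "B0 \<subseteq> sp M i" "spn B0 = sp M i" and S: "subsp (sp M i)"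
      using M i unfolding is_rep_def fin_dim_subsp_def by blast
    obtain B where B: "B \<subseteq> sp M i" "V.independent B" "sp M i \<subseteq> spn B" "card B = vdim (sp M i)"
      using V.basis_exists by blast
    have "finite B" using V.independent_span_bound[OF B0(1) B(2)] B(1) B0(3) by auto
    then obtain b where "bij_betw b {0..<card B} B" using ex_bij_betw_nat_finite by blast
    moreover have "spn B = sp M i" using V.span_subspace[OF B(1) B(3) S] .
    ultimately show ?thesis
      using B by (intro exI[of _ b]) (auto simp: bij_betw_def atLeast0LessThan)
  qed
  then have "\<exists>b. \<forall>i\<in>vs Q. inj_on (b i) {..<vdim (sp M i)} \<and>
      V.independent (b i ` {..<vdim (sp M i)}) \<and> spn (b i ` {..<vdim (sp M i)}) = sp M i"
    by (intro bchoice) blast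
  then have "\<forall>i\<in>vs Q. inj_on (basis_of Q M i) {..<vdim (sp M i)} \<and>
      V.independent (basis_of Q M i ` {..<vdim (sp M i)}) \<and>
      spn (basis_of Q M i ` {..<vdim (sp M i)}) = sp M i"
    unfolding basis_of_def by (rule someI_ex)
  then show ?thesis using i by blast
qed

lemma basis_of_in:
  assumes "is_rep Q M" and "i \<in> vs Q" and "r < vdim (sp M i)"
  shows "basis_of Q M i r \<in> sp M i"
proof -
  have "basis_of Q M i r \<in> spn (basis_of Q M i ` {..<vdim (sp M i)})"
    using assms(3) by (intro V.span_base) auto
  then show ?thesis using basis_of_spec[OF assms(1,2)] by simp
qed

lemma is_rep_subsp: "is_rep Q M \<Longrightarrow> i \<in> vs Q \<Longrightarrow> subsp (sp M i)"
  unfolding is_rep_def fin_dim_subsp_def by blast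

definition coord_col :: "('v, 'a) bquiver \<Rightarrow> ('v, 'a, 'k::field) rep \<Rightarrow> ('v \<times> nat \<times> nat \<Rightarrow> 'k)
    \<Rightarrow> 'v \<Rightarrow> nat \<Rightarrow> nat \<Rightarrow> 'k" where
  "coord_col Q M C i c = (\<Sum>r<vdim (sp M i). sc (C (i, r, c)) (basis_of Q M i r))"

lemma coord_sub_eq_span: "i \<in> vs Q \<Longrightarrow> coord_sub Q M e C i = spn (coord_col Q M C i ` {..<e i})"
  unfolding coord_sub_def coord_col_def by (simp, intro arg_cong[where f = spn]) auto

lemma coord_col_in:
  assumes "is_rep Q M" and "i \<in> vs Q"
  shows "coord_col Q M C i c \<in> sp M i"
  unfolding coord_col_def using basis_of_in[OF assms] is_rep_subsp[OF assms]
  by (intro V.subspace_sum V.subspace_scale) auto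

lemma coord_sub_in_grass_pre:
  assumes M: "is_rep Q M" and C: "C \<in> stiefel Q M e"
  shows "coord_sub Q M e C \<in> grass_pre Q M e"
  unfolding grass_pre_def
proof (intro CollectI conjI ballI allI impI)
  fix i assume i: "i \<in> vs Q"
  show "subsp (coord_sub Q M e C i)" unfolding coord_sub_eq_span[OF i] by (rule V.subspace_span)
  show "coord_sub Q M e C i \<subseteq> sp M i" unfolding coord_sub_eq_span[OF i]
    by (rule V.span_minimal[OF _ is_rep_subsp[OF M i]]) (use coord_col_in[OF M i] in auto)
  show "vdim (coord_sub Q M e C i) = e i" using C i unfolding stiefel_def by blast
next
  fix i assume "i \<notin> vs Q"
  then show "coord_sub Q M e C i = {0}" unfolding coord_sub_def by simp
qed

lemma polyfun_mp_coord_col: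
  assumes M: "is_rep Q M" and a: "a \<in> ars Q" and i: "src Q a \<in> vs Q"
  shows "(\<lambda>C. mp M a (coord_col Q M C (src Q a) c) n) \<in> polyfun"
proof -
  let ?i = "src Q a"
  have "mp M a (coord_col Q M C ?i c) =
      (\<Sum>r<vdim (sp M ?i). sc (C (?i, r, c)) (mp M a (basis_of Q M ?i r)))" for C
    unfolding coord_col_def using M a basis_of_in[OF M i]
    by (intro linear_on_sum[OF is_rep_subsp[OF M i]]) (auto simp: is_rep_def)
  then have "(\<lambda>C. mp M a (coord_col Q M C ?i c) n) =
      (\<lambda>C. \<Sum>r<vdim (sp M ?i). C (?i, r, c) * mp M a (basis_of Q M ?i r) n)"
    by (simp add: sum_apply sc_apply)
  also have "\<dots> \<in> polyfun"
    by (intro polyfun_sum ballI polyfun.pmult[OF polyfun.pvar polyfun.pconst])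
  finally show ?thesis .
qed

lemma vdim_of_stratum:
  assumes "L \<in> stratum Q M e X" and i: "i \<in> vs Q"
  shows "vdim (sp X i) = e i"
proof -
  obtain h where hom: "is_hom Q \<lparr>sp = L, mp = mp M\<rparr> X h"
    and bij: "bij_betw (h i) (L i) (sp X i)"
    using assms unfolding stratum_def isomorphic_def Defs.is_iso_def by auto
  have L: "subsp (L i)" "vdim (L i) = e i"
    using assms unfolding stratum_def Gr_def grass_pre_def by auto
  have "vdim (h i ` L i) = vdim (L i)"
    using hom bij i L
    by (intro vdim_linear_on_inj_image[of "L i"]) (auto simp: is_hom_def bij_betw_def)
  then show ?thesis using bij L(2) by (simp add: bij_betw_def)
qed

lemma rank_of_stratum:
  assumes wf: "bquiver_wf Q" and M: "is_rep Q M" and L: "L \<in> stratum Q M e X"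
    and a: "a \<in> ars Q"
  shows "vdim (mp X a ` sp X (src Q a)) = vdim (mp M a ` L (src Q a))"
proof -
  let ?s = "src Q a" and ?t = "tgt Q a"
  have s: "?s \<in> vs Q" and t: "?t \<in> vs Q" using wf a unfolding bquiver_wf_def by auto
  obtain h where hom: "is_hom Q \<lparr>sp = L, mp = mp M\<rparr> X h"
    and bij: "\<forall>i\<in>vs Q. bij_betw (h i) (L i) (sp X i)"
    using L unfolding stratum_def isomorphic_def Defs.is_iso_def by auto
  have L_sub: "\<forall>i\<in>vs Q. subsp (L i) \<and> L i \<subseteq> sp M i"
    and L_closed: "mp M a ` L ?s \<subseteq> L ?t"
    using L a unfolding stratum_def Gr_def grass_pre_def by auto
  let ?W = "mp M a ` L ?s"
  have "subsp ?W"
    using M a s L_sub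
    by (intro subsp_linear_on_image[OF is_rep_subsp[OF M s]]) (auto simp: is_rep_def)
  then have "vdim (h ?t ` ?W) = vdim ?W"
    using hom bij t L_sub L_closed
    by (intro vdim_linear_on_inj_image[of "L ?t"]) (auto simp: is_hom_def bij_betw_def)
  moreover have "h ?t ` ?W = mp X a ` h ?s ` L ?s"
    using hom a unfolding is_hom_def by (force simp: image_image)
  moreover have "h ?s ` L ?s = sp X ?s" using bij s by (simp add: bij_betw_def)
  ultimately show ?thesis by simp
qed

section \<open>Lower semicontinuity of rank\<close>

lemma zclosed_rank_le:
  assumes wf: "bquiver_wf Q" and M: "is_rep Q M" and a: "a \<in> ars Q"
  shows "zclosed Q M e {L \<in> grass_pre Q M e. vdim (mp M a ` L (src Q a)) \<le> R}"
    (is "zclosed Q M e ?A")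
proof -
  let ?i = "src Q a"
  let ?col = "\<lambda>C c. mp M a (coord_col Q M C ?i c)"
  have i: "?i \<in> vs Q" using wf a unfolding bquiver_wf_def by blast
  define F where "F = (\<lambda>(cs, ns) C. det (mat (Suc R) (Suc R) (\<lambda>(p, q). ?col C (cs q) (ns p))))
      ` {(cs, ns). \<forall>q<Suc R. cs q < e ?i}"
  have "F \<subseteq> polyfun"
    unfolding F_def using polyfun_mp_coord_col[OF M a i] by (auto intro!: polyfun_det)
  moreover have "coord_sub Q M e C \<in> ?A \<longleftrightarrow> (\<forall>f\<in>F. f C = 0)" if "C \<in> stiefel Q M e" for C
  proof -
    have "mp M a ` coord_sub Q M e C ?i = spn (?col C ` {..<e ?i})"
      unfolding coord_sub_eq_span[OF i] image_image[symmetric]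
      using M a coord_col_in[OF M i]
      by (intro linear_on_image_span[OF is_rep_subsp[OF M i]]) (auto simp: is_rep_def)
    then show ?thesis
      using coord_sub_in_grass_pre[OF M that] dim_span_le_iff_minors_zero[of "?col C"]
      by (auto simp: F_def)
  qed
  ultimately show ?thesis unfolding zclosed_def by blast
qed

lemma gr_closure_empty: "gr_closure Q M e {} = {}"
proof -
  have "zclosed Q M e {}"
    unfolding zclosed_def by (intro conjI exI[of _ "{\<lambda>_. 1}"]) (auto intro: polyfun.pconst)
  then show ?thesis unfolding gr_closure_def by blast
qed

lemma rank_le_on_gr_closure:
  assumes "bquiver_wf Q" and "is_rep Q M" and "a \<in> ars Q"
    and "S \<subseteq> Gr Q M e" and "L \<in> gr_closure Q M e S"
    and "\<forall>L'\<in>S. vdim (mp M a ` L' (src Q a)) \<le> R"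
  shows "vdim (mp M a ` L (src Q a)) \<le> R"
  using assms zclosed_rank_le[OF assms(1-3), of e R] unfolding gr_closure_def Gr_def by blast

theorem proposition4p3:
  fixes Q :: "('v::countable, 'a::countable) bquiver"
    and M U N :: "('v, 'a, 'k::field) rep"
    and e :: "'v \<Rightarrow> nat"
  assumes "alg_closed TYPE('k)"
    and "gentle Q"
    and "one_gorenstein Q TYPE('k)"
    and "is_rep Q M" and "gorenstein_projective Q M"
    and "is_rep Q U" and "is_rep Q N"
    and "stratum Q M e U \<inter> gr_closure Q M e (stratum Q M e N) \<noteq> {}"
  shows "\<forall>x\<in>vs (aus Q). dimvec (Phi Q U) x \<le> dimvec (Phi Q N) x"
proof
  have wf: "bquiver_wf Q" using assms(2) unfolding gentle_def by blast
  obtain L where L_U: "L \<in> stratum Q M e U"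
    and L_closure: "L \<in> gr_closure Q M e (stratum Q M e N)"
    using assms(8) by blast
  obtain L' where L'_N: "L' \<in> stratum Q M e N"
    using L_closure gr_closure_empty by fastforce
  fix x assume "x \<in> vs (aus Q)"
  then consider (vertex) i where "x = Inl i" "i \<in> vs Q"
    | (cyclic) a where "x = Inr a" "a \<in> cyc_arrows Q"
    by (auto simp: aus_def)
  then show "dimvec (Phi Q U) x \<le> dimvec (Phi Q N) x"
  proof cases
    case vertex
    then show ?thesis
      using vdim_of_stratum[OF L_U] vdim_of_stratum[OF L'_N] by (simp add: dimvec_def Phi_def)
  next
    case cyclic
    then have a: "a \<in> ars Q" unfolding cyc_arrows_def by blast
    have "vdim (mp M a ` L (src Q a)) \<le> vdim (mp N a ` sp N (src Q a))"
      using rank_le_on_gr_closure[OF wf assms(4) a _ L_closure] rank_of_stratum[OF wf assms(4) _ a]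
      by (auto simp: stratum_def)
    then show ?thesis
      using cyclic rank_of_stratum[OF wf assms(4) L_U a] by (simp add: dimvec_def Phi_def)
  qed
qed

end
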